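(* Let $Q$ be a finite quiver with arrow set $Q_1$, connected, without loops or $2$-cycles, every vertex being the source of exactly two arrows and the target of exactly two arrows, equipped with bijections $f,g:Q_1\to Q_1$ such that for each $\alpha$, $\{f(\alpha),g(\alpha)\}$ is the set of the two arrows starting at the target of $\alpha$, and $f^3=\mathrm{id}$. Assume $g^3=\mathrm{id}$ (i.e. every $g$-orbit has size $3$). Then $Q$ is isomorphic to the adjacency quiver of the ideal triangulation of the sphere with $4$ punctures given by the six edges of a tetrahedron; in particular $Q$ has $6$ vertices, $12$ arrows and $4$ $g$-orbits. Moreover, for every $\alpha\in Q_1$ the arrows $\alpha$, $\bar\alpha$, $f(\alpha)$, $f(\bar\alpha)$ lie in four pairwise different $g$-orbits.
   Context: $\bar\alpha$ denotes the other arrow with the same source as $\alpha$. The adjacency quiver of an ideal triangulation has the arcs as vertices and an arrow $i\to j$ for each puncture $p$ and each occurrence of arcs $i,j$ at $p$ with $j$ immediately following $i$ in the counterclockwise order around $p$. The tetrahedron triangulation has the four vertices of a tetrahedron (on the sphere) as punctures, its six edges as arcs and its four faces as triangles. *)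

theory Defs
  imports Main
begin

definition quiver :: "'v set \<Rightarrow> 'a set \<Rightarrow> ('a \<Rightarrow> 'v) \<Rightarrow> ('a \<Rightarrow> 'v) \<Rightarrow> bool" where
  "quiver V A s t \<longleftrightarrow> (\<forall>\<alpha>\<in>A. s \<alpha> \<in> V \<and> t \<alpha> \<in> V)"

definition quiver_connected :: "'v set \<Rightarrow> 'a set \<Rightarrow> ('a \<Rightarrow> 'v) \<Rightarrow> ('a \<Rightarrow> 'v) \<Rightarrow> bool" where
  "quiver_connected V A s t \<longleftrightarrow> V \<noteq> {} \<and>
     (\<forall>u\<in>V. \<forall>v\<in>V. (u, v) \<in> ({(s \<alpha>, t \<alpha>) | \<alpha>. \<alpha> \<in> A} \<union> {(t \<alpha>, s \<alpha>) | \<alpha>. \<alpha> \<in> A})\<^sup>*)"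

definition no_loops :: "'a set \<Rightarrow> ('a \<Rightarrow> 'v) \<Rightarrow> ('a \<Rightarrow> 'v) \<Rightarrow> bool" where
  "no_loops A s t \<longleftrightarrow> (\<forall>\<alpha>\<in>A. s \<alpha> \<noteq> t \<alpha>)"

definition no_2cycles :: "'a set \<Rightarrow> ('a \<Rightarrow> 'v) \<Rightarrow> ('a \<Rightarrow> 'v) \<Rightarrow> bool" where
  "no_2cycles A s t \<longleftrightarrow> \<not> (\<exists>\<alpha>\<in>A. \<exists>\<beta>\<in>A. s \<beta> = t \<alpha> \<and> t \<beta> = s \<alpha>)"

definition quiver_iso ::
  "'v set \<Rightarrow> 'a set \<Rightarrow> ('a \<Rightarrow> 'v) \<Rightarrow> ('a \<Rightarrow> 'v) \<Rightarrow>
   'w set \<Rightarrow> 'b set \<Rightarrow> ('b \<Rightarrow> 'w) \<Rightarrow> ('b \<Rightarrow> 'w) \<Rightarrow> bool" where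
  "quiver_iso V A s t V' A' s' t' \<longleftrightarrow>
     (\<exists>\<phi> \<psi>. bij_betw \<phi> V V' \<and> bij_betw \<psi> A A' \<and>
        (\<forall>\<alpha>\<in>A. s' (\<psi> \<alpha>) = \<phi> (s \<alpha>) \<and> t' (\<psi> \<alpha>) = \<phi> (t \<alpha>)))"

definition orbit_of :: "('a \<Rightarrow> 'a) \<Rightarrow> 'a \<Rightarrow> 'a set" where
  "orbit_of g \<alpha> = {(g ^^ n) \<alpha> | n. True}"

text \<open>Punctures: 0,1,2,3 (tetrahedron
  vertices); arcs: the six edges, i.e. 2-subsets of {0..3}. The sphere is oriented such that
  around puncture p, with the other punctures a, b, c, the arc {p,b} immediately follows the
  arc {p,a} counterclockwise iff (p,a,b,c) is an even permutation of (0,1,2,3)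
  (this is invariant under the orientation-preserving symmetries, so it is a consistent orientation).
  Evenness is tested by the sign of the Vandermonde product.\<close>

definition tet_ccw :: "nat \<Rightarrow> nat \<Rightarrow> nat \<Rightarrow> bool" where
  "tet_ccw p a b \<longleftrightarrow> p < 4 \<and> a < 4 \<and> b < 4 \<and> p \<noteq> a \<and> p \<noteq> b \<and> a \<noteq> b \<and>
     (let c = 6 - p - a - b; x = [int p, int a, int b, int c] in
        (\<Prod>j<4. \<Prod>i<j. (x ! j - x ! i)) > 0)"

definition tet_vertices :: "nat set set" where
  "tet_vertices = {e. e \<subseteq> {0..3} \<and> card e = 2}"

text \<open>An arrow (p, a, b) is the arrow at puncture p from arc {p,a} to arc {p,b}.\<close>
definition tet_arrows :: "(nat \<times> nat \<times> nat) set" where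
  "tet_arrows = {(p, a, b). tet_ccw p a b}"

definition tet_src :: "nat \<times> nat \<times> nat \<Rightarrow> nat set" where
  "tet_src x = (case x of (p, a, b) \<Rightarrow> {p, a})"

definition tet_tgt :: "nat \<times> nat \<times> nat \<Rightarrow> nat set" where
  "tet_tgt x = (case x of (p, a, b) \<Rightarrow> {p, b})"

end

theory Submission
  imports Defs
begin

text \<open>
  The local conditions at the vertex \<open>t \<alpha>\<close> force the relation \<open>g \<circ> g \<circ> f = f \<circ> f \<circ> g\<close> on
  arrows, so together with \<open>f\<^sup>3 = g\<^sup>3 = id\<close> the permutations \<open>f\<close>, \<open>g\<close> generate an action of a quotient
  of \<open>\<langle>a, b | a\<^sup>3, b\<^sup>3, (a b)\<^sup>2\<rangle> \<cong> A\<^sub>4\<close> (with \<open>a = f\<close>, \<open>b = g\<inverse>\<close>). Loops, 2-cycles and the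
  degree conditions exclude fixed points of the eleven non-trivial elements, so the action is free,
  and connectedness makes it transitive. Hence the arrows form a regular \<open>A\<^sub>4\<close>-set, which is
  exactly the arrow set of the tetrahedron quiver with \<open>f\<close> turning around faces and \<open>g\<close> around
  punctures; vertices and \<open>g\<close>-orbits are then read off on the tetrahedron.
\<close>

lemma quiver_iso_sym:
  assumes "quiver V A s t" and "quiver_iso V A s t V' A' s' t'"
  shows "quiver_iso V' A' s' t' V A s t"
proof -
  obtain \<phi> \<psi> where \<phi>: "bij_betw \<phi> V V'" and \<psi>: "bij_betw \<psi> A A'"
    and compat: "\<forall>\<alpha>\<in>A. s' (\<psi> \<alpha>) = \<phi> (s \<alpha>) \<and> t' (\<psi> \<alpha>) = \<phi> (t \<alpha>)"
    using assms(2) unfolding quiver_iso_def by blast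
  have "s (inv_into A \<psi> \<beta>) = inv_into V \<phi> (s' \<beta>) \<and> t (inv_into A \<psi> \<beta>) = inv_into V \<phi> (t' \<beta>)"
    if "\<beta> \<in> A'" for \<beta>
  proof -
    define \<alpha> where "\<alpha> = inv_into A \<psi> \<beta>"
    have "\<alpha> \<in> A" "\<psi> \<alpha> = \<beta>"
      using \<psi> that unfolding \<alpha>_def by (auto simp: bij_betw_def inv_into_into f_inv_into_f)
    moreover have "s \<alpha> \<in> V" "t \<alpha> \<in> V"
      using assms(1) \<open>\<alpha> \<in> A\<close> by (auto simp: quiver_def)
    ultimately show ?thesis
      using compat \<phi> unfolding \<alpha>_def by (auto simp: bij_betw_def inv_into_f_f)
  qed
  then show ?thesis
    unfolding quiver_iso_def using bij_betw_inv_into[OF \<phi>] bij_betw_inv_into[OF \<psi>] by blast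
qed

lemma quiver_iso_card:
  assumes "quiver_iso V A s t V' A' s' t'"
  shows "card V = card V'" and "card A = card A'"
  using assms bij_betw_same_card unfolding quiver_iso_def by blast+

lemma quiver_iso_if_bij_on_arrows:
  assumes "quiver V A s t" and "quiver V' A' s' t'" and "bij_betw \<psi> A A'"
    and tgt_onto: "\<forall>v\<in>V. \<exists>\<alpha>\<in>A. t \<alpha> = v" "\<forall>v\<in>V'. \<exists>\<beta>\<in>A'. t' \<beta> = v"
    and tgt_compat: "\<And>\<alpha> \<beta>. \<alpha> \<in> A \<Longrightarrow> \<beta> \<in> A \<Longrightarrow> t' (\<psi> \<alpha>) = t' (\<psi> \<beta>) \<longleftrightarrow> t \<alpha> = t \<beta>"
    and src_compat: "\<And>\<alpha>. \<alpha> \<in> A \<Longrightarrow> \<exists>\<beta>\<in>A. s \<alpha> = t \<beta> \<and> s' (\<psi> \<alpha>) = t' (\<psi> \<beta>)"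
  shows "quiver_iso V A s t V' A' s' t'"
proof -
  define \<phi> where "\<phi> v = t' (\<psi> (SOME \<alpha>. \<alpha> \<in> A \<and> t \<alpha> = v))" for v
  have \<phi>_tgt: "\<phi> (t \<alpha>) = t' (\<psi> \<alpha>)" if "\<alpha> \<in> A" for \<alpha>
  proof -
    have "(SOME \<beta>. \<beta> \<in> A \<and> t \<beta> = t \<alpha>) \<in> A \<and> t (SOME \<beta>. \<beta> \<in> A \<and> t \<beta> = t \<alpha>) = t \<alpha>"
      by (rule someI[of _ \<alpha>]) (simp add: that)
    then show ?thesis
      unfolding \<phi>_def using tgt_compat that by blast
  qed
  have "inj_on \<phi> V"
  proof (rule inj_onI)
    fix v w assume "v \<in> V" "w \<in> V" "\<phi> v = \<phi> w"
    then show "v = w"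
      using tgt_onto(1) \<phi>_tgt tgt_compat by metis
  qed
  moreover have "\<phi> ` V = V'"
  proof
    show "\<phi> ` V \<subseteq> V'"
      using tgt_onto(1) \<phi>_tgt assms(2,3) by (force simp: quiver_def bij_betw_def)
    show "V' \<subseteq> \<phi> ` V"
    proof
      fix v assume "v \<in> V'"
      then obtain \<alpha> where "\<alpha> \<in> A" "t' (\<psi> \<alpha>) = v"
        using tgt_onto(2) assms(3) by (metis bij_betw_iff_bijections)
      then show "v \<in> \<phi> ` V"
        using \<phi>_tgt assms(1) by (metis image_eqI quiver_def)
    qed
  qed
  moreover have "s' (\<psi> \<alpha>) = \<phi> (s \<alpha>) \<and> t' (\<psi> \<alpha>) = \<phi> (t \<alpha>)" if "\<alpha> \<in> A" for \<alpha>
    using src_compat[OF that] \<phi>_tgt that by metis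
  ultimately show ?thesis
    using assms(3) unfolding quiver_iso_def bij_betw_def by blast
qed

lemma orbit_of_eq_if_cube:
  assumes "g (g (g x)) = x"
  shows "orbit_of g x = {x, g x, g (g x)}"
proof -
  have "(g ^^ n) x \<in> {x, g x, g (g x)}" for n
    using assms by (induction n) auto
  moreover have "x = (g ^^ 0) x" "g x = (g ^^ 1) x" "g (g x) = (g ^^ 2) x"
    by (simp_all add: numeral_2_eq_2)
  ultimately show ?thesis
    unfolding orbit_of_def by blast
qed

lemma image_orbit_of:
  assumes "\<forall>y\<in>M. h y \<in> M" and "\<forall>y\<in>M. \<phi> (h y) = k (\<phi> y)" and "x \<in> M"
  shows "\<phi> ` orbit_of h x = orbit_of k (\<phi> x)"
proof -
  have "(h ^^ n) x \<in> M \<and> \<phi> ((h ^^ n) x) = (k ^^ n) (\<phi> x)" for n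
    using assms by (induction n) auto
  then show ?thesis
    unfolding orbit_of_def by (auto intro: image_eqI[OF sym])
qed

text \<open>On the arrow \<open>(p, a, b)\<close> of the tetrahedron, \<open>tet_f\<close> continues along the boundary of the face
  \<open>{p, a, b}\<close> and \<open>tet_g\<close> turns around the puncture \<open>p\<close>.\<close>

definition tet_f :: "nat \<times> nat \<times> nat \<Rightarrow> nat \<times> nat \<times> nat" where
  "tet_f = (\<lambda>(p, a, b). (b, p, a))"

definition tet_g :: "nat \<times> nat \<times> nat \<Rightarrow> nat \<times> nat \<times> nat" where
  "tet_g = (\<lambda>(p, a, b). (p, b, 6 - p - a - b))"

lemma tet_arrows_eq:
  "tet_arrows = set [(0,1,2), (2,0,1), (0,2,3), (1,2,0), (3,0,2), (2,1,3),
                     (0,3,1), (2,3,0), (3,2,1), (1,0,3), (1,3,2), (3,1,0)]"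
proof -
  have "tet_arrows = Set.filter (\<lambda>(p, a, b). tet_ccw p a b) ({0..<4} \<times> {0..<4} \<times> {0..<4})"
    by (auto simp: tet_arrows_def tet_ccw_def)
  also have "\<dots> = set [(0,1,2), (2,0,1), (0,2,3), (1,2,0), (3,0,2), (2,1,3),
                     (0,3,1), (2,3,0), (3,2,1), (1,0,3), (1,3,2), (3,1,0)]"
    by code_simp
  finally show ?thesis .
qed

lemma tet_vertices_eq: "tet_vertices = {{0,1}, {0,2}, {0,3}, {1,2}, {1,3}, {2,3}}"
proof -
  have "tet_vertices = Set.filter (\<lambda>e. card e = 2) (Pow {0..3})"
    by (auto simp: tet_vertices_def)
  also have "\<dots> = {{0,1}, {0,2}, {0,3}, {1,2}, {1,3}, {2,3}}"
    by code_simp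
  finally show ?thesis .
qed

lemma card_tet_arrows: "card tet_arrows = 12"
  unfolding tet_arrows_eq by code_simp

lemma card_tet_vertices: "card tet_vertices = 6"
  unfolding tet_vertices_eq by code_simp

lemma tet_f_in [simp]: "\<forall>m\<in>tet_arrows. tet_f m \<in> tet_arrows"
  unfolding tet_arrows_eq by code_simp

lemma tet_g_in [simp]: "\<forall>m\<in>tet_arrows. tet_g m \<in> tet_arrows"
  unfolding tet_arrows_eq by code_simp

lemma tet_g_g_g [simp]: "\<forall>m\<in>tet_arrows. tet_g (tet_g (tet_g m)) = m"
  unfolding tet_arrows_eq by code_simp

lemma tet_src_eq_tgt_f_f: "\<forall>m\<in>tet_arrows. tet_src m = tet_tgt (tet_f (tet_f m))"
  unfolding tet_arrows_eq by code_simp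

lemma tet_tgt_eq_iff:
  "\<forall>m\<in>tet_arrows. \<forall>m'\<in>tet_arrows.
     tet_tgt m' = tet_tgt m \<longleftrightarrow> m' = m \<or> m' = tet_f (tet_f (tet_g m))"
  unfolding tet_arrows_eq by code_simp

lemma tet_tgt_image: "tet_tgt ` tet_arrows = tet_vertices"
  unfolding tet_arrows_eq tet_vertices_eq by code_simp

lemma card_tet_g_orbits: "card (orbit_of tet_g ` tet_arrows) = 4"
proof -
  have "orbit_of tet_g ` tet_arrows = (\<lambda>m. {m, tet_g m, tet_g (tet_g m)}) ` tet_arrows"
    by (simp add: orbit_of_eq_if_cube)
  also have "card \<dots> = 4"
    unfolding tet_arrows_eq by code_simp
  finally show ?thesis .
qed

lemma card_tet_g_orbits_at_source:
  "\<forall>m\<in>tet_arrows. card {orbit_of tet_g m, orbit_of tet_g (tet_g (tet_f (tet_f m))),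
     orbit_of tet_g (tet_f m), orbit_of tet_g (tet_f (tet_g (tet_f (tet_f m))))} = 4"
proof -
  let ?O = "\<lambda>m. {m, tet_g m, tet_g (tet_g m)}"
  have "\<forall>m\<in>tet_arrows. card {?O m, ?O (tet_g (tet_f (tet_f m))),
     ?O (tet_f m), ?O (tet_f (tet_g (tet_f (tet_f m))))} = 4"
    unfolding tet_arrows_eq by code_simp
  then show ?thesis
    by (simp add: orbit_of_eq_if_cube)
qed

lemma quiver_tet: "quiver tet_vertices tet_arrows tet_src tet_tgt"
  unfolding quiver_def
proof
  fix m assume "m \<in> tet_arrows"
  then have "tet_f (tet_f m) \<in> tet_arrows"
    by simp
  then show "tet_src m \<in> tet_vertices \<and> tet_tgt m \<in> tet_vertices"
    using \<open>m \<in> tet_arrows\<close> tet_src_eq_tgt_f_f tet_tgt_image by blast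
qed

locale triangulation_quiver =
  fixes V :: "'v set" and A :: "'a set" and s t :: "'a \<Rightarrow> 'v" and f g :: "'a \<Rightarrow> 'a"
  assumes quiver: "quiver V A s t"
    and no_loops: "no_loops A s t"
    and no_2cycles: "no_2cycles A s t"
    and out_degree: "\<forall>v\<in>V. card {\<alpha>\<in>A. s \<alpha> = v} = 2"
    and in_degree: "\<forall>v\<in>V. card {\<alpha>\<in>A. t \<alpha> = v} = 2"
    and f_closed: "f ` A \<subseteq> A" and g_closed: "g ` A \<subseteq> A"
    and out_arrows: "\<forall>\<alpha>\<in>A. {f \<alpha>, g \<alpha>} = {\<beta>\<in>A. s \<beta> = t \<alpha>}"
    and f_cube: "\<forall>\<alpha>\<in>A. f (f (f \<alpha>)) = \<alpha>"
begin

lemma f_in [simp]: "\<alpha> \<in> A \<Longrightarrow> f \<alpha> \<in> A"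
  using f_closed by blast

lemma g_in [simp]: "\<alpha> \<in> A \<Longrightarrow> g \<alpha> \<in> A"
  using g_closed by blast

lemma f_f_f [simp]: "\<alpha> \<in> A \<Longrightarrow> f (f (f \<alpha>)) = \<alpha>"
  using f_cube by blast

lemma t_in: "\<alpha> \<in> A \<Longrightarrow> t \<alpha> \<in> V"
  using quiver by (auto simp: quiver_def)

lemma s_f [simp]: "\<alpha> \<in> A \<Longrightarrow> s (f \<alpha>) = t \<alpha>"
  and s_g [simp]: "\<alpha> \<in> A \<Longrightarrow> s (g \<alpha>) = t \<alpha>"
  using out_arrows by blast+

lemma out_arrow_cases: "\<alpha> \<in> A \<Longrightarrow> \<beta> \<in> A \<Longrightarrow> s \<beta> = t \<alpha> \<Longrightarrow> \<beta> = f \<alpha> \<or> \<beta> = g \<alpha>"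
  using out_arrows by blast

lemma f_neq_g: assumes "\<alpha> \<in> A" shows "f \<alpha> \<noteq> g \<alpha>"
proof
  assume "f \<alpha> = g \<alpha>"
  then have "{\<beta>\<in>A. s \<beta> = t \<alpha>} = {g \<alpha>}"
    using out_arrows assms by force
  then show False
    using out_degree t_in[OF assms] by force
qed

lemma s_eq_t_f_f: "\<alpha> \<in> A \<Longrightarrow> s \<alpha> = t (f (f \<alpha>))"
  using s_f[of "f (f \<alpha>)"] by simp

lemma t_f_f_g: "\<alpha> \<in> A \<Longrightarrow> t (f (f (g \<alpha>))) = t \<alpha>"
  using s_f[of "f (f (g \<alpha>))"] by simp

lemma t_eq_iff:
  assumes "\<alpha> \<in> A" "\<beta> \<in> A"
  shows "t \<beta> = t \<alpha> \<longleftrightarrow> \<beta> = \<alpha> \<or> \<beta> = f (f (g \<alpha>))"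
proof -
  have "f (f (g \<alpha>)) \<noteq> \<alpha>"
    using f_neq_g[OF assms(1)] f_f_f[of "g \<alpha>"] assms(1) by force
  moreover obtain x y where "{\<gamma>\<in>A. t \<gamma> = t \<alpha>} = {x, y}"
    using in_degree t_in[OF assms(1)] by (meson card_2_iff)
  moreover have "\<alpha> \<in> {\<gamma>\<in>A. t \<gamma> = t \<alpha>}" "f (f (g \<alpha>)) \<in> {\<gamma>\<in>A. t \<gamma> = t \<alpha>}"
    using assms(1) t_f_f_g by auto
  ultimately have "{\<gamma>\<in>A. t \<gamma> = t \<alpha>} = {\<alpha>, f (f (g \<alpha>))}"
    by auto
  then show ?thesis
    using assms by blast
qed

lemma s_eq_iff:
  assumes "\<alpha> \<in> A" "\<beta> \<in> A"
  shows "s \<beta> = s \<alpha> \<longleftrightarrow> \<beta> = \<alpha> \<or> \<beta> = g (f (f \<alpha>))"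
proof -
  have "s \<alpha> = t (f (f \<alpha>))"
    using s_eq_t_f_f[OF assms(1)] .
  then show ?thesis
    using out_arrow_cases[of "f (f \<alpha>)" \<beta>] assms by auto
qed

lemma in_arrow_exists: assumes "v \<in> V" shows "\<exists>\<alpha>\<in>A. t \<alpha> = v"
proof -
  have "card {\<alpha>\<in>A. t \<alpha> = v} \<noteq> 0"
    using in_degree assms by simp
  then show ?thesis
    by (metis (mono_tags, lifting) card.empty empty_Collect_eq)
qed

lemma t_neq_s_if_consecutive: "\<alpha> \<in> A \<Longrightarrow> \<beta> \<in> A \<Longrightarrow> s \<beta> = t \<alpha> \<Longrightarrow> t \<beta> \<noteq> s \<alpha>"
  using no_2cycles unfolding no_2cycles_def by blast

lemma no_fixed_points_local:
  assumes "\<alpha> \<in> A"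
  shows "f \<alpha> \<noteq> \<alpha>" "g \<alpha> \<noteq> \<alpha>"
    and "f (f \<alpha>) \<noteq> \<alpha>" "f (g \<alpha>) \<noteq> \<alpha>" "g (f \<alpha>) \<noteq> \<alpha>" "g (g \<alpha>) \<noteq> \<alpha>"
    and "f (f (g \<alpha>)) \<noteq> \<alpha>"
proof -
  show "f \<alpha> \<noteq> \<alpha>" "g \<alpha> \<noteq> \<alpha>"
    using no_loops assms s_f s_g unfolding no_loops_def by metis+
  have "x (y \<alpha>) \<noteq> \<alpha>" if "x \<in> {f, g}" "y \<in> {f, g}" for x y
  proof
    assume "x (y \<alpha>) = \<alpha>"
    then have "s \<alpha> = t (y \<alpha>)"
      using that assms by (metis insertE s_f s_g f_in g_in singletonD)
    moreover have "s (y \<alpha>) = t \<alpha>" "y \<alpha> \<in> A"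
      using that assms by auto
    ultimately show False
      using t_neq_s_if_consecutive assms by metis
  qed
  then show "f (f \<alpha>) \<noteq> \<alpha>" "f (g \<alpha>) \<noteq> \<alpha>" "g (f \<alpha>) \<noteq> \<alpha>" "g (g \<alpha>) \<noteq> \<alpha>"
    by auto
  show "f (f (g \<alpha>)) \<noteq> \<alpha>"
    using f_neq_g[OF assms] f_f_f[of "g \<alpha>"] assms by force
qed

lemma connected_closed_subset_eq:
  assumes "quiver_connected V A s t" and "E \<subseteq> A" and "E \<noteq> {}"
    and closed: "\<forall>\<alpha>\<in>E. f \<alpha> \<in> E \<and> g \<alpha> \<in> E"
  shows "E = A"
proof -
  have into_E: "\<beta> \<in> E" if \<beta>: "\<beta> \<in> A" and "t \<beta> \<in> t ` E" for \<beta>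
  proof -
    obtain \<gamma> where "\<gamma> \<in> E" "t \<beta> = t \<gamma>"
      using \<open>t \<beta> \<in> t ` E\<close> by blast
    then show ?thesis
      using t_eq_iff[of \<gamma> \<beta>] \<beta> closed \<open>E \<subseteq> A\<close> by auto
  qed
  have from_E: "\<beta> \<in> E" if \<beta>: "\<beta> \<in> A" and "s \<beta> \<in> t ` E" for \<beta>
  proof -
    obtain \<gamma> where "\<gamma> \<in> E" "s \<beta> = t \<gamma>"
      using \<open>s \<beta> \<in> t ` E\<close> by blast
    then show ?thesis
      using out_arrow_cases[of \<gamma> \<beta>] \<beta> closed \<open>E \<subseteq> A\<close> by auto
  qed
  obtain \<alpha>0 where "\<alpha>0 \<in> E"
    using \<open>E \<noteq> {}\<close> by blast
  let ?R = "{(s \<alpha>, t \<alpha>) | \<alpha>. \<alpha> \<in> A} \<union> {(t \<alpha>, s \<alpha>) | \<alpha>. \<alpha> \<in> A}"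
  have "v \<in> t ` E" if "(t \<alpha>0, v) \<in> ?R\<^sup>*" for v
    using that
  proof (induction rule: rtrancl_induct)
    case base
    then show ?case
      using \<open>\<alpha>0 \<in> E\<close> by blast
  next
    case (step u v)
    then obtain \<beta> where "\<beta> \<in> A" and "(u, v) = (s \<beta>, t \<beta>) \<or> (u, v) = (t \<beta>, s \<beta>)"
      by blast
    from this(2) show ?case
    proof
      assume "(u, v) = (s \<beta>, t \<beta>)"
      then show ?case
        using from_E[OF \<open>\<beta> \<in> A\<close>] step.IH by auto
    next
      assume "(u, v) = (t \<beta>, s \<beta>)"
      then have "f (f \<beta>) \<in> E"
        using into_E[OF \<open>\<beta> \<in> A\<close>] step.IH closed by auto
      then show ?case
        using \<open>(u, v) = (t \<beta>, s \<beta>)\<close> s_eq_t_f_f[OF \<open>\<beta> \<in> A\<close>] by auto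
    qed
  qed
  then have "t ` A \<subseteq> t ` E"
    using assms(1,2) \<open>\<alpha>0 \<in> E\<close> t_in unfolding quiver_connected_def by blast
  then show ?thesis
    using into_E \<open>E \<subseteq> A\<close> by blast
qed

end

locale tetrahedral_quiver = triangulation_quiver V A s t f g
  for V :: "'v set" and A :: "'a set" and s t :: "'a \<Rightarrow> 'v" and f g :: "'a \<Rightarrow> 'a" +
  fixes base :: 'a
  assumes g_cube: "\<forall>\<alpha>\<in>A. g (g (g \<alpha>)) = \<alpha>"
    and connected: "quiver_connected V A s t"
    and base_in: "base \<in> A"
begin

lemma g_g_g [simp]: "\<alpha> \<in> A \<Longrightarrow> g (g (g \<alpha>)) = \<alpha>"
  using g_cube by blast

text \<open>The out-arrows at \<open>t \<alpha>\<close> are \<open>f \<alpha>\<close> and \<open>g \<alpha>\<close>; the arrow \<open>g (f (f (g \<alpha>)))\<close> starts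
  there and differs from \<open>g \<alpha> = f (f (f (g \<alpha>)))\<close>.\<close>
lemma g_g_f: assumes "\<alpha> \<in> A" shows "g (g (f \<alpha>)) = f (f (g \<alpha>))"
proof -
  define \<gamma> where "\<gamma> = f (f (g \<alpha>))"
  have "\<gamma> \<in> A" "f \<gamma> = g \<alpha>" "t \<gamma> = t \<alpha>"
    using assms t_f_f_g unfolding \<gamma>_def by auto
  then have "g \<gamma> = f \<alpha> \<or> g \<gamma> = g \<alpha>"
    using out_arrow_cases[of \<alpha> "g \<gamma>"] assms by auto
  then have "g \<gamma> = f \<alpha>"
    using f_neq_g[OF \<open>\<gamma> \<in> A\<close>] \<open>f \<gamma> = g \<alpha>\<close> by auto
  then show ?thesis
    using g_g_g[OF \<open>\<gamma> \<in> A\<close>] by (simp add: \<gamma>_def)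
qed

lemma g_f_f: assumes "\<alpha> \<in> A" shows "g (f (f \<alpha>)) = f (g (g \<alpha>))"
proof -
  have "f (f (g (f (f \<alpha>)))) = g (g \<alpha>)"
    using g_g_f[of "f (f \<alpha>)"] assms by simp
  then have "f (f (f (g (f (f \<alpha>))))) = f (g (g \<alpha>))"
    by simp
  then show ?thesis
    using assms by simp
qed

lemma g_f_g: assumes "\<alpha> \<in> A" shows "g (f (g \<alpha>)) = f (g (f \<alpha>))"
proof -
  have "f (g (f \<alpha>)) = g (f (f (g (g (f \<alpha>)))))"
    using g_f_f[of "g (g (f \<alpha>))"] assms by simp
  also have "\<dots> = g (f (g \<alpha>))"
    using g_g_f assms by simp
  finally show ?thesis
    by simp
qed

lemmas word_relations = f_f_f g_g_g g_g_f g_f_f g_f_g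

text \<open>Each of these words is conjugate to one of the words in \<open>no_fixed_points_local\<close>.\<close>
lemma no_fixed_points_conjugate:
  assumes "\<alpha> \<in> A"
  shows "f (g (f \<alpha>)) \<noteq> \<alpha>" "f (g (g \<alpha>)) \<noteq> \<alpha>" "f (f (g (f \<alpha>))) \<noteq> \<alpha>" "f (f (g (g \<alpha>))) \<noteq> \<alpha>"
proof -
  show "f (g (f \<alpha>)) \<noteq> \<alpha>"
  proof
    assume "f (g (f \<alpha>)) = \<alpha>"
    then have "f (f (g (f \<alpha>))) = f \<alpha>"
      by simp
    then show False
      using no_fixed_points_local(7)[of "f \<alpha>"] assms by simp
  qed
  show "f (g (g \<alpha>)) \<noteq> \<alpha>"
  proof
    assume "f (g (g \<alpha>)) = \<alpha>"
    then have "f (f (f (g (g \<alpha>)))) = f (f \<alpha>)"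
      by simp
    then show False
      using no_fixed_points_local(7)[of "f (f \<alpha>)"] assms by (simp add: g_f_f)
  qed
  show "f (f (g (f \<alpha>))) \<noteq> \<alpha>"
  proof
    assume "f (f (g (f \<alpha>))) = \<alpha>"
    then have "f (f (f (g (f \<alpha>)))) = f \<alpha>"
      by simp
    then show False
      using no_fixed_points_local(2)[of "f \<alpha>"] assms by simp
  qed
  show "f (f (g (g \<alpha>))) \<noteq> \<alpha>"
  proof
    assume "f (f (g (g \<alpha>))) = \<alpha>"
    then have "g (f (f (g (g \<alpha>)))) = g \<alpha>"
      by simp
    then show False
      using no_fixed_points_local(1)[of "g \<alpha>"] assms by (simp add: g_f_f)
  qed
qed

lemma f_eq_iff: "\<alpha> \<in> A \<Longrightarrow> \<beta> \<in> A \<Longrightarrow> f \<alpha> = \<beta> \<longleftrightarrow> \<alpha> = f (f \<beta>)"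
  and g_eq_iff: "\<alpha> \<in> A \<Longrightarrow> \<beta> \<in> A \<Longrightarrow> g \<alpha> = \<beta> \<longleftrightarrow> \<alpha> = g (g \<beta>)"
  by auto

text \<open>The arrow of the tetrahedron reached from \<open>(0, 1, 2)\<close> by a word in \<open>tet_f\<close>, \<open>tet_g\<close>
  is sent to the same word applied to \<open>base\<close>.\<close>
definition from_tet :: "nat \<times> nat \<times> nat \<Rightarrow> 'a" where
  "from_tet m = the (map_of
     [((0,1,2), base), ((2,0,1), f base), ((0,2,3), g base), ((1,2,0), f (f base)),
      ((3,0,2), f (g base)), ((2,1,3), g (f base)), ((0,3,1), g (g base)),
      ((2,3,0), f (f (g base))), ((3,2,1), f (g (f base))), ((1,0,3), f (g (g base))),
      ((1,3,2), f (f (g (f base)))), ((3,1,0), f (f (g (g base))))] m)"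

lemma from_tet_in: "m \<in> tet_arrows \<Longrightarrow> from_tet m \<in> A"
  unfolding tet_arrows_eq by (auto simp: from_tet_def base_in)

lemma from_tet_f: "\<forall>m\<in>tet_arrows. from_tet (tet_f m) = f (from_tet m)"
  unfolding tet_arrows_eq by (simp add: from_tet_def tet_f_def base_in word_relations)

lemma from_tet_g: "\<forall>m\<in>tet_arrows. from_tet (tet_g m) = g (from_tet m)"
  unfolding tet_arrows_eq by (simp add: from_tet_def tet_g_def base_in word_relations)

lemma inj_on_from_tet: "inj_on from_tet tet_arrows"
  unfolding inj_on_def tet_arrows_eq
  by (simp add: from_tet_def base_in word_relations f_eq_iff g_eq_iff
      no_fixed_points_local no_fixed_points_local[THEN not_sym]
      no_fixed_points_conjugate no_fixed_points_conjugate[THEN not_sym])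

lemma from_tet_image: "from_tet ` tet_arrows = A"
proof (rule connected_closed_subset_eq[OF connected])
  show "from_tet ` tet_arrows \<subseteq> A"
    using from_tet_in by blast
  show "from_tet ` tet_arrows \<noteq> {}"
    using card_tet_arrows by force
  show "\<forall>\<alpha>\<in>from_tet ` tet_arrows. f \<alpha> \<in> from_tet ` tet_arrows \<and> g \<alpha> \<in> from_tet ` tet_arrows"
  proof
    fix \<alpha> assume "\<alpha> \<in> from_tet ` tet_arrows"
    then obtain m where "m \<in> tet_arrows" "\<alpha> = from_tet m"
      by blast
    then have "f \<alpha> = from_tet (tet_f m)" "g \<alpha> = from_tet (tet_g m)"
      using from_tet_f from_tet_g by simp_all
    then show "f \<alpha> \<in> from_tet ` tet_arrows \<and> g \<alpha> \<in> from_tet ` tet_arrows"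
      using \<open>m \<in> tet_arrows\<close> by simp
  qed
qed

lemma bij_betw_from_tet: "bij_betw from_tet tet_arrows A"
  using inj_on_from_tet from_tet_image by (simp add: bij_betw_def)

lemma t_from_tet_eq_iff:
  assumes "m \<in> tet_arrows" "m' \<in> tet_arrows"
  shows "t (from_tet m) = t (from_tet m') \<longleftrightarrow> tet_tgt m = tet_tgt m'"
proof -
  have "from_tet (tet_f (tet_f (tet_g m'))) = f (f (g (from_tet m')))"
    using assms from_tet_f from_tet_g by simp
  then have "t (from_tet m) = t (from_tet m') \<longleftrightarrow>
      from_tet m = from_tet m' \<or> from_tet m = from_tet (tet_f (tet_f (tet_g m')))"
    using t_eq_iff from_tet_in assms by simp
  also have "\<dots> \<longleftrightarrow> m = m' \<or> m = tet_f (tet_f (tet_g m'))"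
    using inj_on_from_tet assms by (auto dest: inj_onD)
  also have "\<dots> \<longleftrightarrow> tet_tgt m = tet_tgt m'"
    using tet_tgt_eq_iff assms by blast
  finally show ?thesis .
qed

lemma quiver_iso_tetrahedron: "quiver_iso V A s t tet_vertices tet_arrows tet_src tet_tgt"
proof -
  have "quiver_iso tet_vertices tet_arrows tet_src tet_tgt V A s t"
  proof (rule quiver_iso_if_bij_on_arrows[OF quiver_tet quiver bij_betw_from_tet])
    show "\<forall>v\<in>tet_vertices. \<exists>m\<in>tet_arrows. tet_tgt m = v"
      unfolding tet_tgt_image[symmetric] by blast
    show "\<forall>v\<in>V. \<exists>\<alpha>\<in>A. t \<alpha> = v"
      using in_arrow_exists by blast
    show "t (from_tet m) = t (from_tet m') \<longleftrightarrow> tet_tgt m = tet_tgt m'"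
      if "m \<in> tet_arrows" "m' \<in> tet_arrows" for m m'
      using t_from_tet_eq_iff that .
    show "\<exists>m'\<in>tet_arrows. tet_src m = tet_tgt m' \<and> s (from_tet m) = t (from_tet m')"
      if "m \<in> tet_arrows" for m
    proof
      show "tet_f (tet_f m) \<in> tet_arrows"
        using that by simp
      have "s (from_tet m) = t (f (f (from_tet m)))"
        using s_eq_t_f_f from_tet_in that by blast
      then show "tet_src m = tet_tgt (tet_f (tet_f m)) \<and> s (from_tet m) = t (from_tet (tet_f (tet_f m)))"
        using that tet_src_eq_tgt_f_f from_tet_f by simp
    qed
  qed
  then show ?thesis
    by (rule quiver_iso_sym[OF quiver_tet])
qed

lemma orbit_of_from_tet: "m \<in> tet_arrows \<Longrightarrow> orbit_of g (from_tet m) = from_tet ` orbit_of tet_g m"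
  using image_orbit_of[of tet_arrows tet_g from_tet g m] from_tet_g by simp

lemma inj_on_image_from_tet_orbits: "inj_on (image from_tet) (orbit_of tet_g ` tet_arrows)"
proof (rule inj_on_subset[OF inj_on_image_Pow[OF inj_on_from_tet]])
  show "orbit_of tet_g ` tet_arrows \<subseteq> Pow tet_arrows"
    by (auto simp: orbit_of_eq_if_cube)
qed

lemma card_g_orbits: "card (orbit_of g ` A) = 4"
proof -
  have "orbit_of g ` A = image from_tet ` orbit_of tet_g ` tet_arrows"
    unfolding from_tet_image[symmetric] image_image using orbit_of_from_tet by simp
  then show ?thesis
    using card_image[OF inj_on_image_from_tet_orbits] card_tet_g_orbits by simp
qed

lemma card_g_orbits_at_source:
  assumes "\<alpha> \<in> A" "\<alpha>' \<in> A" "s \<alpha>' = s \<alpha>" "\<alpha>' \<noteq> \<alpha>"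
  shows "card {orbit_of g \<alpha>, orbit_of g \<alpha>', orbit_of g (f \<alpha>), orbit_of g (f \<alpha>')} = 4"
proof -
  obtain m where m: "m \<in> tet_arrows" "\<alpha> = from_tet m"
    using assms(1) from_tet_image by blast
  let ?m' = "tet_g (tet_f (tet_f m))"
  have "\<alpha>' = g (f (f \<alpha>))"
    using s_eq_iff assms by blast
  then have "\<alpha>' = from_tet ?m'" "f \<alpha> = from_tet (tet_f m)" "f \<alpha>' = from_tet (tet_f ?m')"
    using m from_tet_f from_tet_g by simp_all
  then have "{orbit_of g \<alpha>, orbit_of g \<alpha>', orbit_of g (f \<alpha>), orbit_of g (f \<alpha>')} =
      image from_tet ` {orbit_of tet_g m, orbit_of tet_g ?m',
                        orbit_of tet_g (tet_f m), orbit_of tet_g (tet_f ?m')}"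
    using m orbit_of_from_tet by simp
  moreover have "card (image from_tet ` {orbit_of tet_g m, orbit_of tet_g ?m',
                        orbit_of tet_g (tet_f m), orbit_of tet_g (tet_f ?m')}) =
      card {orbit_of tet_g m, orbit_of tet_g ?m', orbit_of tet_g (tet_f m), orbit_of tet_g (tet_f ?m')}"
    by (rule card_image, rule inj_on_subset[OF inj_on_image_from_tet_orbits]) (use m in simp)
  ultimately show ?thesis
    using card_tet_g_orbits_at_source m(1) by simp
qed

end

theorem lemma3p11:
  fixes V :: "'v set" and A :: "'a set" and s t :: "'a \<Rightarrow> 'v" and f g :: "'a \<Rightarrow> 'a"
  assumes "finite V" and "finite A"
    and "quiver V A s t"
    and "quiver_connected V A s t"
    and "no_loops A s t" and "no_2cycles A s t"
    and "\<forall>v\<in>V. card {\<alpha>\<in>A. s \<alpha> = v} = 2"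
    and "\<forall>v\<in>V. card {\<alpha>\<in>A. t \<alpha> = v} = 2"
    and "bij_betw f A A" and "bij_betw g A A"
    and "\<forall>\<alpha>\<in>A. {f \<alpha>, g \<alpha>} = {\<beta>\<in>A. s \<beta> = t \<alpha>}"
    and "\<forall>\<alpha>\<in>A. f (f (f \<alpha>)) = \<alpha>"
    and "\<forall>\<alpha>\<in>A. g (g (g \<alpha>)) = \<alpha>"
  shows "quiver_iso V A s t tet_vertices tet_arrows tet_src tet_tgt
    \<and> card V = 6 \<and> card A = 12 \<and> card (orbit_of g ` A) = 4
    \<and> (\<forall>\<alpha>\<in>A. \<forall>\<alpha>'\<in>A. s \<alpha>' = s \<alpha> \<and> \<alpha>' \<noteq> \<alpha> \<longrightarrow>
          card {orbit_of g \<alpha>, orbit_of g \<alpha>', orbit_of g (f \<alpha>), orbit_of g (f \<alpha>')} = 4)"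
proof -
  interpret triangulation_quiver V A s t f g
    using assms by unfold_locales (auto simp: bij_betw_def)
  obtain base where "base \<in> A"
    using assms(4) in_arrow_exists unfolding quiver_connected_def by blast
  interpret tetrahedral_quiver V A s t f g base
    using assms \<open>base \<in> A\<close> by unfold_locales auto
  show ?thesis
    using quiver_iso_tetrahedron quiver_iso_card[OF quiver_iso_tetrahedron]
      card_tet_vertices card_tet_arrows card_g_orbits card_g_orbits_at_source by simp
qed

end
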